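(* Define integer matrices $(a(i,j))_{i,j\ge1}$ and $(b(i,j))_{i,j\ge1}$ as follows. The first three rows are (entries listed for $j=1,2,\dots$; all further entries in these rows are $0$): \begin{itemize} \item $a(1,\cdot)=(10,-36,27)$; $a(2,\cdot)=(-8,306,-2160,5508,-5832,2187)$; $a(3,\cdot)=(1,-360,10566,-99144,423549,-944784,1141614,-708588,177147)$; \item $b(1,\cdot)=(-9,252,-891,729)$; $b(2,\cdot)=(1,-378,8613,-54675,138510,-150903,59049)$; $b(3,\cdot)=(0,147,-14553,312255,-2617839,10764414,-23914845,29288304,-18600435,4782969)$. \end{itemize} For $i\ge4$ and $j\ge1$, both $m=a$ and $m=b$ satisfy $$m(i,j)=30m(i-1,j-1)-108m(i-1,j-2)+81m(i-1,j-3)-12m(i-2,j-1)+9m(i-2,j-2)+m(i-3,j-1),$$ with $m(i,j)=0$ whenever $j\le0$. Let $t(i,j)=\sum_{k\ge1}a(i,k)b(k,j)$ for $i,j\ge1$ (a finite sum). Then for all $i,j\ge1$, $$\pi(t(i,j))\ge\min_{k\ge1}\{\pi(a(i,k))+\pi(b(k,j))\}\ge\min_{k\ge1}\left\{\left\lfloor\frac{3k-i-1}{2}\right\rfloor+\left\lfloor\frac{3j-k}{2}\right\rfloor\right\}.$$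
   Context: For an integer $n$, $\pi(n)$ denotes the $3$-adic order of $n$, with the convention $\pi(0)=\infty$. $\lfloor x\rfloor$ is the largest integer not exceeding $x$. *)

theory Defs
  imports Complex_Main "HOL-Computational_Algebra.Computational_Algebra" "HOL-Library.Extended_Real"
begin

text \<open>Column index 0 always gives 0 (this encodes m(i,j) = 0 for j <= 0, since natural-number
  subtraction j - d truncates to 0 when j <= d).\<close>

definition row :: "int list \<Rightarrow> nat \<Rightarrow> int" where
  "row xs j = (if 1 \<le> j \<and> j \<le> length xs then xs ! (j - 1) else 0)"

fun ma :: "nat \<Rightarrow> nat \<Rightarrow> int" where
  "ma 0 j = 0"
| "ma (Suc 0) j = row [10, -36, 27] j"
| "ma (Suc (Suc 0)) j = row [-8, 306, -2160, 5508, -5832, 2187] j"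
| "ma (Suc (Suc (Suc 0))) j =
     row [1, -360, 10566, -99144, 423549, -944784, 1141614, -708588, 177147] j"
| "ma (Suc (Suc (Suc (Suc n)))) j =
     (if j = 0 then 0 else
        30 * ma (n + 3) (j - 1) - 108 * ma (n + 3) (j - 2) + 81 * ma (n + 3) (j - 3)
      - 12 * ma (n + 2) (j - 1) + 9 * ma (n + 2) (j - 2) + ma (n + 1) (j - 1))"

fun mb :: "nat \<Rightarrow> nat \<Rightarrow> int" where
  "mb 0 j = 0"
| "mb (Suc 0) j = row [-9, 252, -891, 729] j"
| "mb (Suc (Suc 0)) j = row [1, -378, 8613, -54675, 138510, -150903, 59049] j"
| "mb (Suc (Suc (Suc 0))) j =
     row [0, 147, -14553, 312255, -2617839, 10764414, -23914845, 29288304, -18600435, 4782969] j"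
| "mb (Suc (Suc (Suc (Suc n)))) j =
     (if j = 0 then 0 else
        30 * mb (n + 3) (j - 1) - 108 * mb (n + 3) (j - 2) + 81 * mb (n + 3) (j - 3)
      - 12 * mb (n + 2) (j - 1) + 9 * mb (n + 2) (j - 2) + mb (n + 1) (j - 1))"

definition mt :: "nat \<Rightarrow> nat \<Rightarrow> int" where
  "mt i j = (\<Sum>k \<in> {k. 1 \<le> k \<and> ma i k * mb k j \<noteq> 0}. ma i k * mb k j)"

definition pi3 :: "int \<Rightarrow> ereal" where
  "pi3 n = (if n = 0 then \<infinity> else ereal (real (multiplicity (3::int) n)))"

end

theory Submission
  imports Defs
begin

(* Both bounds come from divisibility of single entries: 3^floor((3j-i-1)/2) divides a(i,j) and
   3^floor((3j-i)/2) divides b(i,j). The coefficient of m(i-s, j-d) in the common recurrence is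
   divisible by 3^p with 3d <= 2p + s, which is exactly what lets the bound floor((3j-i-c)/2)
   propagate from the first three rows to all rows by induction on i. The first inequality is
   the ultrametric inequality for the 3-adic valuation together with pi(xy) = pi(x) + pi(y). *)

lemma row_pow3_dvd:
  assumes "list_all (\<lambda>(k, x). (3::int) ^ nat (f k) dvd x) (zip [1..<Suc (length xs)] xs)"
  shows "3 ^ nat (f j) dvd row xs j"
proof (cases "1 \<le> j \<and> j \<le> length xs")
  case True
  then have "j - 1 < length xs" by linarith
  moreover have "\<forall>n < length xs. (3::int) ^ nat (f (Suc n)) dvd xs ! n"
    using assms by (simp add: list_all_length nth_zip del: upt_Suc)
  ultimately have "(3::int) ^ nat (f (Suc (j - 1))) dvd xs ! (j - 1)"
    by blast
  with True show ?thesis by (simp add: row_def)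
qed (auto simp: row_def)

lemma ma_zero_column [simp]: "ma i 0 = 0"
  by (induction i "0::nat" rule: ma.induct) (simp_all add: row_def)

lemma mb_zero_column [simp]: "mb i 0 = 0"
  by (induction i "0::nat" rule: mb.induct) (simp_all add: row_def)

definition obeys_recurrence :: "(nat \<Rightarrow> nat \<Rightarrow> int) \<Rightarrow> bool" where
  "obeys_recurrence m \<longleftrightarrow> (\<forall>i j. 4 \<le> i \<longrightarrow> 1 \<le> j \<longrightarrow>
     m i j = 30 * m (i - 1) (j - 1) - 108 * m (i - 1) (j - 2) + 81 * m (i - 1) (j - 3)
       - 12 * m (i - 2) (j - 1) + 9 * m (i - 2) (j - 2) + m (i - 3) (j - 1))"

lemma ma_obeys_recurrence: "obeys_recurrence ma"
  by (auto simp: obeys_recurrence_def numeral_eq_Suc dest!: le_Suc_ex)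

lemma mb_obeys_recurrence: "obeys_recurrence mb"
  by (auto simp: obeys_recurrence_def numeral_eq_Suc dest!: le_Suc_ex)

lemma ma_initial_rows:
  assumes "1 \<le> i" "i \<le> 3"
  shows "3 ^ nat ((3 * int j - int i - 1) div 2) dvd ma i j"
proof -
  from assms consider "i = Suc 0" | "i = Suc (Suc 0)" | "i = Suc (Suc (Suc 0))" by linarith
  then show ?thesis
  proof cases
    case 1
    then show ?thesis
      using row_pow3_dvd[of "\<lambda>j. (3 * int j - 1 - 1) div 2" "[10, -36, 27]" j]
      by (simp add: upt_rec)
  next
    case 2
    then show ?thesis
      using row_pow3_dvd[of "\<lambda>j. (3 * int j - 2 - 1) div 2"
          "[-8, 306, -2160, 5508, -5832, 2187]" j]
      by (simp add: upt_rec)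
  next
    case 3
    then show ?thesis
      using row_pow3_dvd[of "\<lambda>j. (3 * int j - 3 - 1) div 2"
          "[1, -360, 10566, -99144, 423549, -944784, 1141614, -708588, 177147]" j]
      by (simp add: upt_rec)
  qed
qed

lemma mb_initial_rows:
  assumes "1 \<le> i" "i \<le> 3"
  shows "3 ^ nat ((3 * int j - int i) div 2) dvd mb i j"
proof -
  from assms consider "i = Suc 0" | "i = Suc (Suc 0)" | "i = Suc (Suc (Suc 0))" by linarith
  then show ?thesis
  proof cases
    case 1
    then show ?thesis
      using row_pow3_dvd[of "\<lambda>j. (3 * int j - 1) div 2" "[-9, 252, -891, 729]" j]
      by (simp add: upt_rec)
  next
    case 2
    then show ?thesis
      using row_pow3_dvd[of "\<lambda>j. (3 * int j - 2) div 2"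
          "[1, -378, 8613, -54675, 138510, -150903, 59049]" j]
      by (simp add: upt_rec)
  next
    case 3
    then show ?thesis
      using row_pow3_dvd[of "\<lambda>j. (3 * int j - 3) div 2"
          "[0, 147, -14553, 312255, -2617839, 10764414, -23914845, 29288304, -18600435, 4782969]" j]
      by (simp add: upt_rec)
  qed
qed

lemma pow3_dvd_by_recurrence:
  fixes m :: "nat \<Rightarrow> nat \<Rightarrow> int" and c :: int
  assumes zero_column: "\<And>i. m i 0 = 0"
    and recurrence: "obeys_recurrence m"
    and initial_rows: "\<And>i j. 1 \<le> i \<Longrightarrow> i \<le> 3 \<Longrightarrow>
      3 ^ nat ((3 * int j - int i - c) div 2) dvd m i j"
    and "1 \<le> i"
  shows "3 ^ nat ((3 * int j - int i - c) div 2) dvd m i j"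
  using \<open>1 \<le> i\<close>
proof (induction i arbitrary: j rule: less_induct)
  case (less i)
  define bound where "bound i j = nat ((3 * int j - int i - c) div 2)" for i j :: nat
  consider "i \<le> 3" | "4 \<le> i" "j = 0" | "4 \<le> i" "1 \<le> j" by linarith
  then show ?case
  proof cases
    case 1
    with less.prems show ?thesis by (rule initial_rows)
  next
    case 2
    then show ?thesis by (simp add: zero_column)
  next
    case 3
    have shifted_term: "3 ^ bound i j dvd q * m (i - s) (j - d)"
      if "1 \<le> s" "s \<le> 3" "3 ^ p dvd q" "3 * d \<le> 2 * p + s" for s d p and q :: int
    proof (cases "d \<le> j")
      case True
      have "3 ^ bound (i - s) (j - d) dvd m (i - s) (j - d)"
        unfolding bound_def using \<open>4 \<le> i\<close> that(1,2) by (intro less.IH) auto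
      moreover have "bound i j \<le> p + bound (i - s) (j - d)"
        unfolding bound_def using True \<open>4 \<le> i\<close> that(2,4) by (simp add: of_nat_diff)
      then have "(3::int) ^ bound i j dvd 3 ^ p * 3 ^ bound (i - s) (j - d)"
        by (simp flip: power_add add: le_imp_power_dvd)
      ultimately show ?thesis
        using that(3) by (meson dvd_trans mult_dvd_mono)
    qed (simp add: zero_column)
    have "3 ^ bound i j dvd 30 * m (i - 1) (j - 1) - 108 * m (i - 1) (j - 2)
      + 81 * m (i - 1) (j - 3) - 12 * m (i - 2) (j - 1) + 9 * m (i - 2) (j - 2)
      + 1 * m (i - 3) (j - 1)"
      by (intro dvd_add dvd_diff
          shifted_term[where s=1 and d=1 and p=1] shifted_term[where s=1 and d=2 and p=3]
          shifted_term[where s=1 and d=3 and p=4] shifted_term[where s=2 and d=1 and p=1]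
          shifted_term[where s=2 and d=2 and p=2] shifted_term[where s=3 and d=1 and p=0])
        auto
    then show ?thesis
      using recurrence 3 by (simp add: obeys_recurrence_def bound_def)
  qed
qed

lemma ma_pow3_dvd: "1 \<le> i \<Longrightarrow> 3 ^ nat ((3 * int j - int i - 1) div 2) dvd ma i j"
  by (rule pow3_dvd_by_recurrence) (simp_all add: ma_obeys_recurrence ma_initial_rows)

lemma mb_pow3_dvd: "1 \<le> i \<Longrightarrow> 3 ^ nat ((3 * int j - int i) div 2) dvd mb i j"
  using pow3_dvd_by_recurrence[of mb 0 i j] by (simp add: mb_obeys_recurrence mb_initial_rows)

lemma pi3_ge_iff_pow3_dvd: "ereal (real n) \<le> pi3 x \<longleftrightarrow> (3::int) ^ n dvd x"
  by (cases "x = 0") (simp_all add: pi3_def power_dvd_iff_le_multiplicity)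

lemma pi3_ge_of_pow3_dvd:
  assumes "(3::int) ^ nat A dvd x"
  shows "ereal (real_of_int A) \<le> pi3 x"
proof -
  have "ereal (real_of_int A) \<le> ereal (real (nat A))"
    by simp
  also have "\<dots> \<le> pi3 x"
    using assms by (simp only: pi3_ge_iff_pow3_dvd)
  finally show ?thesis .
qed

lemma pi3_mult: "pi3 (x * y) = pi3 x + pi3 y"
proof -
  have "prime_elem (3::int)"
    by (simp add: prime_elem_iff_prime_abs)
  then show ?thesis
    by (cases "x = 0 \<or> y = 0") (auto simp: pi3_def prime_elem_multiplicity_mult_distrib)
qed

lemma pi3_sum_ge:
  assumes "\<And>k. k \<in> K \<Longrightarrow> v \<le> pi3 (f k)"
  shows "v \<le> pi3 (\<Sum>k\<in>K. f k)"
proof (rule ccontr)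
  assume "\<not> v \<le> pi3 (\<Sum>k\<in>K. f k)"
  then have nonzero: "(\<Sum>k\<in>K. f k) \<noteq> 0" and
    less: "pi3 (\<Sum>k\<in>K. f k) < v"
    by (auto simp: pi3_def)
  define n where "n = multiplicity 3 (\<Sum>k\<in>K. f k)"
  have "(3::int) ^ Suc n dvd f k" if "k \<in> K" for k
  proof -
    have "ereal (real n) < pi3 (f k)"
      using less assms[OF that] nonzero by (simp add: pi3_def n_def)
    then have "ereal (real (Suc n)) \<le> pi3 (f k)"
      by (cases "f k = 0") (simp_all add: pi3_def)
    then show ?thesis
      by (simp only: pi3_ge_iff_pow3_dvd)
  qed
  then have "ereal (real (Suc n)) \<le> pi3 (\<Sum>k\<in>K. f k)"
    by (simp only: pi3_ge_iff_pow3_dvd dvd_sum)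
  with nonzero show False
    by (simp add: pi3_def n_def)
qed

lemma floor_bound_le_pi3_ma_mb:
  assumes "1 \<le> i" "1 \<le> k"
  shows "ereal (real_of_int
      (\<lfloor>(3 * real k - real i - 1) / 2\<rfloor> + \<lfloor>(3 * real j - real k) / 2\<rfloor>))
    \<le> pi3 (ma i k) + pi3 (mb k j)"
proof -
  have "\<lfloor>(3 * real k - real i - 1) / 2\<rfloor> = (3 * int k - int i - 1) div 2"
    using floor_divide_of_int_eq[of "3 * int k - int i - 1" 2] by simp
  moreover have "\<lfloor>(3 * real j - real k) / 2\<rfloor> = (3 * int j - int k) div 2"
    using floor_divide_of_int_eq[of "3 * int j - int k" 2] by simp
  moreover have "ereal (real_of_int ((3 * int k - int i - 1) div 2)) \<le> pi3 (ma i k)"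
    using assms(1) by (intro pi3_ge_of_pow3_dvd ma_pow3_dvd)
  moreover have "ereal (real_of_int ((3 * int j - int k) div 2)) \<le> pi3 (mb k j)"
    using assms(2) by (intro pi3_ge_of_pow3_dvd mb_pow3_dvd)
  ultimately show ?thesis
    by (metis add_mono of_int_add plus_ereal.simps(1))
qed

theorem corollary3p2:
  fixes i j :: nat
  assumes "1 \<le> i" and "1 \<le> j"
  shows "pi3 (mt i j) \<ge> (INF k \<in> {1..}. pi3 (ma i k) + pi3 (mb k j))
    \<and> (INF k \<in> {1..}. pi3 (ma i k) + pi3 (mb k j))
        \<ge> (INF k \<in> {(1::nat)..}. ereal (real_of_int
              (\<lfloor>(3 * real k - real i - 1) / 2\<rfloor> + \<lfloor>(3 * real j - real k) / 2\<rfloor>)))"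
proof
  show "(INF k \<in> {1..}. pi3 (ma i k) + pi3 (mb k j)) \<le> pi3 (mt i j)"
    unfolding mt_def by (rule pi3_sum_ge) (auto simp flip: pi3_mult intro: INF_lower)
next
  show "(INF k \<in> {(1::nat)..}. ereal (real_of_int
      (\<lfloor>(3 * real k - real i - 1) / 2\<rfloor> + \<lfloor>(3 * real j - real k) / 2\<rfloor>)))
    \<le> (INF k \<in> {1..}. pi3 (ma i k) + pi3 (mb k j))"
    using floor_bound_le_pi3_ma_mb[OF assms(1)] by (intro INF_mono) auto
qed

end
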